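(* Let $n \ge 2$ and let $\ell(0) \in \mathbb{N}_0^n$ be an arbitrary initial load vector of the random pairwise load balancing process described in the context, with $m=\sum_i \ell_i(0)$ tokens, average load $\varnothing = m/n$, and initial discrepancy $\Delta = \max_i \ell_i(0) - \min_i \ell_i(0) > 0$. Let $T$ be the first time step at which every node has load in $\{\mathrm{round}(\varnothing)-1, \mathrm{round}(\varnothing), \mathrm{round}(\varnothing)+1\}$. Then with high probability (i.e., with probability $1-O(1/n)$), $T = O(n\log \Delta + n\log n)$, where the constant hidden in $O(\cdot)$ is absolute (independent of $n$, $m$, $\Delta$ and $\ell(0)$).
   Context: Random pairwise load balancing process: $n$ nodes (complete graph), $m$ indistinguishable tokens. The load vector at time $t\in\mathbb{N}_0$ is $\ell(t)=(\ell_1(t),\dots,\ell_n(t))\in\mathbb{Z}^n$, where $\ell_i(t)$ is the number of tokens at node $i$. In each time step $t$, independently of everything before, an ordered pair $(u,v)$ of distinct nodes is chosen uniformly at random, and the loads are updated to $\ell_u(t+1)=\lceil(\ell_u(t)+\ell_v(t))/2\rceil$, $\ell_v(t+1)=\lfloor(\ell_u(t)+\ell_v(t))/2\rfloor$; all other loads are unchanged. The average load is $\varnothing=m/n$ and $\mathrm{round}(\varnothing)$ denotes $\varnothing$ rounded to the nearest integer. *)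

theory Defs
  imports "HOL-Probability.Probability"
begin

text \<open>Load vectors of n nodes are int lists of length n; nodes are 0..n-1.\<close>

definition lb_pairs :: "nat \<Rightarrow> (nat \<times> nat) set" where
  "lb_pairs n = {(u, v). u < n \<and> v < n \<and> u \<noteq> v}"

definition lb_balance :: "int list \<Rightarrow> nat \<times> nat \<Rightarrow> int list" where
  "lb_balance l p = (case p of (u, v) \<Rightarrow>
     l[u := \<lceil>real_of_int (l ! u + l ! v) / 2\<rceil>, v := \<lfloor>real_of_int (l ! u + l ! v) / 2\<rfloor>])"

definition lb_step :: "int list \<Rightarrow> int list pmf" where
  "lb_step l = map_pmf (lb_balance l) (pmf_of_set (lb_pairs (length l)))"

definition in_band :: "int \<Rightarrow> int list \<Rightarrow> bool" where
  "in_band r l = (\<forall>i < length l. l ! i \<in> {r - 1, r, r + 1})"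

text \<open>Joint law of (load vector at time t, whether the band was reached at some time s \<le> t).
  Hence the probability of the flag being True is P(T \<le> t).\<close>
fun lb_hit :: "int \<Rightarrow> nat \<Rightarrow> int list \<Rightarrow> (int list \<times> bool) pmf" where
  "lb_hit r 0 l = return_pmf (l, in_band r l)"
| "lb_hit r (Suc t) l =
     bind_pmf (lb_hit r t l) (\<lambda>(x, b). map_pmf (\<lambda>y. (y, b \<or> in_band r y)) (lb_step x))"

definition discrepancy :: "int list \<Rightarrow> int" where
  "discrepancy l = Max (set l) - Min (set l)"

end

theory Submission
  imports Defs
begin

text \<open>
  Let a be the average load and r = round a. The quadratic potential
  Q = (\<Sum>i. (l_i - a)^2) never increases, and balancing the pair (u, v) lowers it
  by at least ((l_u - l_v)^2 - 1) / 2; averaged over all pairs this is a drop of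
  about Q / n per step as long as Q \<ge> n. Below that threshold rounding dominates and we
  switch to the band potential, the sum of the squared distances of the loads to the
  interval [r - 1, r + 1]. When Q < n, at least n / 6 nodes lie on each side of r, and
  balancing a node with a partner on the other side of r at least halves the node's
  squared distance to the band, so this potential also drops by a factor 1 - \<Omega>(1 / n)
  in expectation. The combined potential is at most n \<Delta>^2 initially and at least 1
  whenever some load lies outside the band; after t = O(n log \<Delta> + n log n) steps its
  expectation is at most 1 / n, and Markov's inequality gives the theorem.
\<close>

lemma ceiling_half_of_int: "\<lceil>real_of_int s / 2\<rceil> = (s + 1) div 2"
proof -
  have "\<lceil>real_of_int s / 2\<rceil> = - \<lfloor>real_of_int (- s) / 2\<rfloor>"
    by (simp add: ceiling_def)
  also have "\<lfloor>real_of_int (- s) / 2\<rfloor> = (- s) div 2"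
    using floor_divide_of_int_eq[of "- s" 2] by simp
  finally show ?thesis by presburger
qed

lemma floor_half_of_int: "\<lfloor>real_of_int s / 2\<rfloor> = s div 2"
  using floor_divide_of_int_eq[of s 2] by simp

lemma lb_balance_eq:
  "lb_balance l (u, v) = l[u := (l ! u + l ! v + 1) div 2, v := (l ! u + l ! v) div 2]"
  unfolding lb_balance_def by (simp only: prod.case ceiling_half_of_int floor_half_of_int)

lemma lb_balance_split:
  fixes x y :: int
  shows "(x + y) div 2 + (x + y + 1) div 2 = x + y"
    and "(x + y) div 2 \<le> (x + y + 1) div 2"
    and "(x + y + 1) div 2 \<le> (x + y) div 2 + 1"
  by presburger+

lemma length_lb_balance [simp]: "length (lb_balance l p) = length l"
  by (cases p) (simp add: lb_balance_eq)

lemma lb_pairs_eq_Sigma: "lb_pairs n = Sigma {..<n} (\<lambda>u. {..<n} - {u})"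
  unfolding lb_pairs_def by auto

lemma finite_lb_pairs [simp]: "finite (lb_pairs n)"
  unfolding lb_pairs_eq_Sigma by auto

lemma card_lb_pairs: "card (lb_pairs n) = n * (n - 1)"
  unfolding lb_pairs_eq_Sigma by simp

lemma lb_pairs_nonempty:
  assumes "2 \<le> n"
  shows "lb_pairs n \<noteq> {}"
proof -
  have "(0, 1) \<in> lb_pairs n" using assms unfolding lb_pairs_def by simp
  then show ?thesis by blast
qed

lemma sum_lb_pairs:
  fixes g :: "nat \<times> nat \<Rightarrow> 'a::ab_group_add"
  shows "(\<Sum>p\<in>lb_pairs n. g p) = (\<Sum>u<n. \<Sum>v<n. g (u, v)) - (\<Sum>u<n. g (u, u))"
proof -
  have "(\<Sum>p\<in>lb_pairs n. g p) = (\<Sum>u<n. \<Sum>v\<in>{..<n} - {u}. g (u, v))"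
    unfolding lb_pairs_eq_Sigma by (simp add: sum.Sigma)
  also have "\<dots> = (\<Sum>u<n. (\<Sum>v<n. g (u, v)) - g (u, u))"
    by (intro sum.cong refl) (simp add: sum_diff1)
  finally show ?thesis by (simp add: sum_subtractf)
qed

lemma sum_nth_list_update2:
  fixes F :: "'a \<Rightarrow> 'b::ab_group_add"
  assumes "u < length l" "v < length l" "u \<noteq> v"
  shows "(\<Sum>i<length l. F (l[u := c, v := d] ! i))
       = (\<Sum>i<length l. F (l ! i)) - F (l ! u) - F (l ! v) + F c + F d"
proof -
  have "(\<Sum>i<length l. F (l[u := c, v := d] ! i)) =
     (\<Sum>i<length l. F (l ! i) + (if i = u then F c - F (l ! u) else 0)
                              + (if i = v then F d - F (l ! v) else 0))"
    using assms by (intro sum.cong) (auto simp: nth_list_update)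
  also have "\<dots> = (\<Sum>i<length l. F (l ! i)) + (F c - F (l ! u)) + (F d - F (l ! v))"
    using assms by (simp add: sum.distrib)
  finally show ?thesis by (simp add: algebra_simps)
qed

lemma sum_list_lb_balance:
  assumes "p \<in> lb_pairs (length l)"
  shows "sum_list (lb_balance l p) = sum_list l"
proof -
  obtain u v where p: "p = (u, v)" "u < length l" "v < length l" "u \<noteq> v"
    using assms unfolding lb_pairs_def by auto
  show ?thesis
    using sum_nth_list_update2[OF p(2-4), of id] lb_balance_split(1)[of "l ! u" "l ! v"]
    by (simp add: p(1) lb_balance_eq sum_list_sum_nth atLeast0LessThan)
qed

lemma set_pmf_lb_step:
  "2 \<le> length l \<Longrightarrow> set_pmf (lb_step l) = lb_balance l ` lb_pairs (length l)"
  unfolding lb_step_def using lb_pairs_nonempty by simp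

lemma nn_integral_lb_step:
  assumes "2 \<le> length l" and "\<And>y. 0 \<le> f y"
  shows "(\<integral>\<^sup>+ y. ennreal (f y) \<partial>lb_step l)
       = ennreal ((\<Sum>p\<in>lb_pairs (length l). f (lb_balance l p)) / real (card (lb_pairs (length l))))"
proof -
  let ?P = "lb_pairs (length l)"
  have "?P \<noteq> {}" using assms(1) by (rule lb_pairs_nonempty)
  then have "0 < real (card ?P)" by (simp add: card_gt_0_iff)
  have "(\<integral>\<^sup>+ y. ennreal (f y) \<partial>lb_step l) = (\<Sum>p\<in>?P. ennreal (f (lb_balance l p))) / of_nat (card ?P)"
    unfolding lb_step_def using \<open>?P \<noteq> {}\<close> by (simp add: nn_integral_pmf_of_set)
  also have "\<dots> = ennreal (\<Sum>p\<in>?P. f (lb_balance l p)) / ennreal (real (card ?P))"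
    using assms(2) by (simp add: ennreal_of_nat_eq_real_of_nat)
  also have "\<dots> = ennreal ((\<Sum>p\<in>?P. f (lb_balance l p)) / real (card ?P))"
    using \<open>0 < real (card ?P)\<close> assms(2) by (intro divide_ennreal) (auto intro: sum_nonneg)
  finally show ?thesis .
qed

lemma sq_dev_balanced_gain:
  fixes x y p q :: int and a :: real
  assumes "p + q = x + y" "p \<le> q" "q \<le> p + 1"
  shows "((real_of_int x - y)^2 - 1) / 2
           \<le> (x - a)^2 + (y - a)^2 - (p - a)^2 - (q - a)^2"
    and "0 \<le> (x - a)^2 + (y - a)^2 - (p - a)^2 - (q - a)^2"
proof -
  have q: "real_of_int q = x + y - p" using assms(1) by linarith
  have gain: "(x - a)^2 + (y - a)^2 - (p - a)^2 - (q - a)^2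
      = ((real_of_int x - y)^2 - (real_of_int q - p)^2) / 2"
    unfolding q by (simp add: field_simps power2_eq_square)
  have "q = p \<or> q = p + 1" using assms(2,3) by linarith
  then have qp: "(real_of_int q - p)^2 \<le> 1" by auto
  then show "((real_of_int x - y)^2 - 1) / 2 \<le> (x - a)^2 + (y - a)^2 - (p - a)^2 - (q - a)^2"
    unfolding gain by simp
  show "0 \<le> (x - a)^2 + (y - a)^2 - (p - a)^2 - (q - a)^2"
  proof (cases "x = y")
    case True
    then have "q = p" using assms by presburger
    then show ?thesis unfolding gain by simp
  next
    case False
    then have "1 \<le> \<bar>real_of_int x - y\<bar>" by linarith
    then have "1 \<le> (real_of_int x - y)^2"
      by (metis abs_le_square_iff abs_one one_power2)
    then show ?thesis unfolding gain using qp by simp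
  qed
qed

definition pos_sq :: "int \<Rightarrow> int" where
  "pos_sq z = (max z 0)^2"

lemma pos_sq_nonneg: "0 \<le> pos_sq z"
  unfolding pos_sq_def by simp

lemma pos_sq_eq_0: "z \<le> 0 \<Longrightarrow> pos_sq z = 0"
  unfolding pos_sq_def by simp

lemma pos_sq_tangent: "pos_sq x + 2 * (max x 0 * (y - x)) \<le> pos_sq y"
proof (cases "0 \<le> x")
  case True
  show ?thesis
  proof (cases "0 \<le> y")
    case True
    have "0 \<le> (y - x)^2" by simp
    then show ?thesis using \<open>0 \<le> x\<close> True by (simp add: pos_sq_def power2_eq_square algebra_simps)
  next
    case False
    then have "0 \<le> x * (x - 2 * y)" using \<open>0 \<le> x\<close> by simp
    then show ?thesis using \<open>0 \<le> x\<close> False by (simp add: pos_sq_def power2_eq_square algebra_simps)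
  qed
qed (simp add: pos_sq_def)

lemma pos_sq_balanced_le:
  assumes "p + q = a + b" "p \<le> q" "q \<le> p + 1"
  shows "pos_sq p + pos_sq q \<le> pos_sq a + pos_sq b"
proof (cases "a \<le> b")
  case True
  have a: "a = p + q - b" using assms(1) by simp
  have "max p 0 * (a - p) + max q 0 * (b - q) = (b - q) * (max q 0 - max p 0)"
    unfolding a by (simp add: algebra_simps)
  moreover have "0 \<le> (b - q) * (max q 0 - max p 0)"
    using assms True by (intro mult_nonneg_nonneg) auto
  ultimately show ?thesis using pos_sq_tangent[of p a] pos_sq_tangent[of q b] by linarith
next
  case False
  have b: "b = p + q - a" using assms(1) by simp
  have "max p 0 * (b - p) + max q 0 * (a - q) = (a - q) * (max q 0 - max p 0)"
    unfolding b by (simp add: algebra_simps)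
  moreover have "0 \<le> (a - q) * (max q 0 - max p 0)"
    using assms False by (intro mult_nonneg_nonneg) auto
  ultimately show ?thesis using pos_sq_tangent[of p b] pos_sq_tangent[of q a] by linarith
qed

lemma pos_sq_balanced_half:
  assumes "p + q = a + b" "p \<le> q" "q \<le> p + 1" "b \<le> -1"
  shows "2 * (pos_sq p + pos_sq q) \<le> pos_sq a"
proof (cases "0 \<le> p")
  case True
  have "(q - p)^2 \<le> 1"
    using assms(2,3) by (cases "q = p") (auto simp: abs_le_iff intro!: power_le_one)
  have "2 * (p^2 + q^2) = (p + q)^2 + (q - p)^2" by (simp add: power2_eq_square algebra_simps)
  also have "\<dots> \<le> (p + q + 1)^2"
    using \<open>(q - p)^2 \<le> 1\<close> True assms(2) by (simp add: power2_eq_square algebra_simps)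
  also have "\<dots> \<le> a^2" using True assms by (intro power_mono) auto
  finally show ?thesis using True assms by (simp add: pos_sq_def)
next
  case False
  then show ?thesis using assms(3) by (simp add: pos_sq_def)
qed

definition band_excess :: "int \<Rightarrow> int \<Rightarrow> int" where
  "band_excess r x = pos_sq (x - (r + 1)) + pos_sq ((r - 1) - x)"

definition band_gain :: "int \<Rightarrow> int \<Rightarrow> int \<Rightarrow> int" where
  "band_gain r x y = of_bool (y \<le> r) * pos_sq (x - (r + 1)) + of_bool (r \<le> y) * pos_sq ((r - 1) - x)"

lemma band_gain_self: "band_gain r x x = 0"
  unfolding band_gain_def by (auto intro: pos_sq_eq_0)

lemma band_excess_balanced_gain:
  assumes "p + q = x + y" "p \<le> q" "q \<le> p + 1"
  shows "band_gain r x y \<le> 2 * (band_excess r x + band_excess r y - band_excess r p - band_excess r q)"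
proof -
  let ?U = "\<lambda>z. pos_sq (z - (r + 1))" and ?D = "\<lambda>z. pos_sq ((r - 1) - z)"
  have U: "?U p + ?U q \<le> ?U x + ?U y"
    by (rule pos_sq_balanced_le) (use assms in auto)
  have D: "?D q + ?D p \<le> ?D x + ?D y"
    by (rule pos_sq_balanced_le) (use assms in auto)
  have U2: "2 * (?U p + ?U q) \<le> ?U x" if "y \<le> r"
    by (rule pos_sq_balanced_half[where b = "y - (r + 1)"]) (use that assms in auto)
  have D2: "2 * (?D q + ?D p) \<le> ?D x" if "r \<le> y"
    by (rule pos_sq_balanced_half[where b = "(r - 1) - y"]) (use that assms in auto)
  have "?U y = 0" if "y \<le> r" using that by (simp add: pos_sq_eq_0)
  moreover have "?D y = 0" if "r \<le> y" using that by (simp add: pos_sq_eq_0)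
  ultimately show ?thesis
    unfolding band_gain_def band_excess_def
    using U D U2 D2 by (cases "y \<le> r"; cases "r \<le> y") auto
qed

lemma band_excess_le_sq_dev:
  assumes "\<bar>real_of_int r - a\<bar> \<le> 1/2"
  shows "real_of_int (band_excess r x) \<le> (x - a)^2"
proof -
  have "a \<le> r + 1/2" "r - 1/2 \<le> a" using assms unfolding abs_diff_le_iff by linarith+
  consider "r + 1 \<le> x" | "x \<le> r - 1" | "x = r"
    by linarith
  then show ?thesis
  proof cases
    case 1
    then have "real_of_int (band_excess r x) = (real_of_int x - (r + 1))^2"
      by (simp add: band_excess_def pos_sq_def)
    also have "\<dots> \<le> (x - a)^2" using 1 \<open>a \<le> r + 1/2\<close> by (intro power_mono) linarith+
    finally show ?thesis .
  next
    case 2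
    then have "real_of_int (band_excess r x) = ((real_of_int r - 1) - x)^2"
      by (simp add: band_excess_def pos_sq_def)
    also have "\<dots> \<le> (a - x)^2" using 2 \<open>r - 1/2 \<le> a\<close> by (intro power_mono) linarith+
    finally show ?thesis by (simp add: power2_commute)
  qed (simp add: band_excess_def pos_sq_def)
qed

lemma one_le_band_excess:
  assumes "x \<notin> {r - 1, r, r + 1}"
  shows "1 \<le> band_excess r x"
proof -
  have "1 \<le> x - (r + 1) \<or> 1 \<le> (r - 1) - x" using assms by auto
  then show ?thesis
    unfolding band_excess_def using pos_sq_nonneg
    by (auto simp: pos_sq_def intro: one_le_power add_increasing add_increasing2)
qed

definition quad_pot :: "real \<Rightarrow> int list \<Rightarrow> real" where
  "quad_pot a l = (\<Sum>i<length l. (real_of_int (l ! i) - a)^2)"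

definition band_pot :: "int \<Rightarrow> int list \<Rightarrow> real" where
  "band_pot r l = (\<Sum>i<length l. real_of_int (band_excess r (l ! i)))"

lemma quad_pot_nonneg: "0 \<le> quad_pot a l"
  unfolding quad_pot_def by (simp add: sum_nonneg)

lemma band_pot_nonneg: "0 \<le> band_pot r l"
  unfolding band_pot_def band_excess_def using pos_sq_nonneg by (simp add: sum_nonneg)

lemma band_pot_le_quad_pot: "\<bar>real_of_int r - a\<bar> \<le> 1/2 \<Longrightarrow> band_pot r l \<le> quad_pot a l"
  unfolding band_pot_def quad_pot_def by (intro sum_mono band_excess_le_sq_dev)

lemma quad_pot_lb_balance:
  assumes "(u, v) \<in> lb_pairs (length l)"
  shows "quad_pot a (lb_balance l (u, v)) \<le> quad_pot a l - ((real_of_int (l ! u) - real_of_int (l ! v))^2 - 1) / 2"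
    and "quad_pot a (lb_balance l (u, v)) \<le> quad_pot a l"
proof -
  let ?x = "l ! u" and ?y = "l ! v"
  have uv: "u < length l" "v < length l" "u \<noteq> v" using assms unfolding lb_pairs_def by auto
  have "quad_pot a (lb_balance l (u, v)) = quad_pot a l
      - ((?x - a)^2 + (?y - a)^2 - (real_of_int ((?x + ?y) div 2) - a)^2
         - (real_of_int ((?x + ?y + 1) div 2) - a)^2)"
    unfolding quad_pot_def lb_balance_eq length_list_update
    using sum_nth_list_update2[OF uv, of "\<lambda>z. (real_of_int z - a)^2"] by simp
  then show "quad_pot a (lb_balance l (u, v)) \<le> quad_pot a l - ((real_of_int ?x - real_of_int ?y)^2 - 1) / 2"
    and "quad_pot a (lb_balance l (u, v)) \<le> quad_pot a l"
    using sq_dev_balanced_gain[OF lb_balance_split[of ?x ?y], where a = a] by linarith+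
qed

lemma band_pot_lb_balance:
  assumes "(u, v) \<in> lb_pairs (length l)"
  shows "band_pot r (lb_balance l (u, v)) \<le> band_pot r l - band_gain r (l ! u) (l ! v) / 2"
proof -
  let ?x = "l ! u" and ?y = "l ! v"
  have uv: "u < length l" "v < length l" "u \<noteq> v" using assms unfolding lb_pairs_def by auto
  define gain where "gain = band_excess r ?x + band_excess r ?y
      - band_excess r ((?x + ?y) div 2) - band_excess r ((?x + ?y + 1) div 2)"
  have "band_pot r (lb_balance l (u, v)) = band_pot r l - gain"
    unfolding band_pot_def lb_balance_eq length_list_update gain_def
    using sum_nth_list_update2[OF uv, of "\<lambda>z. real_of_int (band_excess r z)"] by simp
  moreover have "band_gain r ?x ?y \<le> 2 * gain"
    unfolding gain_def by (rule band_excess_balanced_gain[OF lb_balance_split])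
  then have "real_of_int (band_gain r ?x ?y) \<le> 2 * real_of_int gain"
    by (metis of_int_le_iff of_int_mult of_int_numeral)
  ultimately show ?thesis by linarith
qed

lemma sum_sum_sq_diff_eq:
  fixes d :: "'i \<Rightarrow> real"
  assumes "(\<Sum>i\<in>I. d i) = 0"
  shows "(\<Sum>u\<in>I. \<Sum>v\<in>I. (d u - d v)^2) = 2 * card I * (\<Sum>i\<in>I. (d i)^2)"
proof -
  have "(\<Sum>u\<in>I. \<Sum>v\<in>I. (d u - d v)^2) = (\<Sum>u\<in>I. \<Sum>v\<in>I. (d u)^2 + (d v)^2 - 2 * (d u * d v))"
    by (simp add: power2_diff algebra_simps)
  also have "\<dots> = (\<Sum>u\<in>I. card I * (d u)^2 + (\<Sum>v\<in>I. (d v)^2) - 2 * (d u * (\<Sum>v\<in>I. d v)))"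
    by (simp add: sum.distrib sum_subtractf sum_distrib_left)
  also have "\<dots> = 2 * card I * (\<Sum>i\<in>I. (d i)^2)"
    using assms by (simp add: sum.distrib sum_distrib_left mult.assoc)
  finally show ?thesis .
qed

lemma count_below_round_lower_bound:
  fixes x :: "'i \<Rightarrow> int"
  assumes "(\<Sum>i\<in>I. real_of_int (x i) - a) = 0" "\<bar>real_of_int r - a\<bar> \<le> 1/2"
  shows "2 * card I - (\<Sum>i\<in>I. (real_of_int (x i) - a)^2) \<le> 6 * (\<Sum>i\<in>I. of_bool (x i \<le> r))"
proof -
  have "a \<le> r + 1/2" using assms(2) unfolding abs_diff_le_iff by linarith
  \<comment> \<open>Summing this pointwise bound over I makes the right-hand side vanish.\<close>
  have "1/2 - 3/2 * of_bool (x i \<le> r) - (x i - a)^2 / 4 \<le> real_of_int (x i) - a" for i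
  proof (cases "x i \<le> r")
    case True
    have "(real_of_int (x i) - a + 2)^2 / 4 = (real_of_int (x i) - a)^2 / 4 + (real_of_int (x i) - a) + 1"
      by (simp add: power2_eq_square field_simps)
    moreover have "0 \<le> (real_of_int (x i) - a + 2)^2 / 4" by simp
    moreover have "of_bool (x i \<le> r) = (1::real)" using True by simp
    ultimately show ?thesis by linarith
  next
    case False
    then have "real_of_int r + 1 \<le> x i" by simp
    moreover have "0 \<le> (real_of_int (x i) - a)^2 / 4" by simp
    moreover have "of_bool (x i \<le> r) = (0::real)" using False by simp
    ultimately show ?thesis using \<open>a \<le> r + 1/2\<close> by linarith
  qed
  then have "(\<Sum>i\<in>I. 1/2 - 3/2 * of_bool (x i \<le> r) - (x i - a)^2 / 4) \<le> 0"
    using assms(1) sum_mono by (metis (no_types, lifting))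
  moreover have "(\<Sum>i\<in>I. 1/2 - 3/2 * of_bool (x i \<le> r) - (x i - a)^2 / 4)
      = card I / 2 - 3/2 * (\<Sum>i\<in>I. of_bool (x i \<le> r)) - (\<Sum>i\<in>I. (x i - a)^2) / 4"
    by (simp add: sum_subtractf sum_distrib_left sum_divide_distrib)
  ultimately show ?thesis by linarith
qed

lemma count_above_round_lower_bound:
  fixes x :: "'i \<Rightarrow> int"
  assumes "(\<Sum>i\<in>I. real_of_int (x i) - a) = 0" "\<bar>real_of_int r - a\<bar> \<le> 1/2"
  shows "2 * card I - (\<Sum>i\<in>I. (real_of_int (x i) - a)^2) \<le> 6 * (\<Sum>i\<in>I. of_bool (r \<le> x i))"
proof -
  have "(\<Sum>i\<in>I. real_of_int (- x i) - - a) = - (\<Sum>i\<in>I. real_of_int (x i) - a)"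
    by (subst sum_negf[symmetric]) simp
  then have "(\<Sum>i\<in>I. real_of_int (- x i) - - a) = 0" using assms(1) by simp
  moreover have "\<bar>real_of_int (- r) - - a\<bar> \<le> 1/2" using assms(2) by (simp add: abs_minus_commute)
  ultimately have "2 * card I - (\<Sum>i\<in>I. (real_of_int (- x i) - - a)^2)
      \<le> 6 * (\<Sum>i\<in>I. of_bool (- x i \<le> - r))"
    by (rule count_below_round_lower_bound)
  then show ?thesis by (simp add: power2_commute)
qed

lemma sum_dev_mean_eq_0:
  assumes "length l = n" "a = real_of_int (sum_list l) / n"
  shows "(\<Sum>i<n. real_of_int (l ! i) - a) = 0"
proof (cases "n = 0")
  case False
  have "real_of_int (sum_list l) = (\<Sum>i<n. real_of_int (l ! i))"
    using assms(1) by (simp add: sum_list_sum_nth atLeast0LessThan)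
  then show ?thesis using False assms(2) by (simp add: sum_subtractf)
qed simp

lemma sum_lb_pairs_sq_diff:
  assumes "length l = n" "a = real_of_int (sum_list l) / n"
  shows "(\<Sum>p\<in>lb_pairs n. (real_of_int (l ! fst p) - real_of_int (l ! snd p))^2) = 2 * real n * quad_pot a l"
proof -
  have "(\<Sum>p\<in>lb_pairs n. (real_of_int (l ! fst p) - real_of_int (l ! snd p))^2)
      = (\<Sum>u<n. \<Sum>v<n. ((real_of_int (l ! u) - a) - (real_of_int (l ! v) - a))^2)"
    by (simp add: sum_lb_pairs)
  also have "\<dots> = 2 * real n * quad_pot a l"
    using sum_sum_sq_diff_eq[OF sum_dev_mean_eq_0[OF assms]] assms(1) by (simp add: quad_pot_def)
  finally show ?thesis .
qed

lemma sum_quad_pot_lb_balance: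
  assumes "length l = n" "a = real_of_int (sum_list l) / n"
  shows "(\<Sum>p\<in>lb_pairs n. quad_pot a (lb_balance l p))
      \<le> real (n * (n - 1)) * quad_pot a l - (n * quad_pot a l - real (n * (n - 1)) / 2)"
proof -
  let ?g = "\<lambda>p. ((real_of_int (l ! fst p) - real_of_int (l ! snd p))^2 - 1) / 2"
  have "(\<Sum>p\<in>lb_pairs n. quad_pot a (lb_balance l p)) \<le> (\<Sum>p\<in>lb_pairs n. quad_pot a l - ?g p)"
  proof (rule sum_mono)
    fix p assume "p \<in> lb_pairs n"
    then show "quad_pot a (lb_balance l p) \<le> quad_pot a l - ?g p"
      using quad_pot_lb_balance(1)[of "fst p" "snd p" l a] assms(1) by simp
  qed
  also have "\<dots> = real (n * (n - 1)) * quad_pot a l - (\<Sum>p\<in>lb_pairs n. ?g p)"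
    by (simp add: sum_subtractf card_lb_pairs)
  also have "(\<Sum>p\<in>lb_pairs n. ?g p)
      = (\<Sum>p\<in>lb_pairs n. (real_of_int (l ! fst p) - real_of_int (l ! snd p))^2) / 2 - real (n * (n - 1)) / 2"
    by (simp add: sum_subtractf sum_divide_distrib diff_divide_distrib card_lb_pairs)
  finally show ?thesis using sum_lb_pairs_sq_diff[OF assms] by simp
qed

lemma sum_lb_pairs_band_gain:
  assumes "length l = n" "a = real_of_int (sum_list l) / n" "\<bar>real_of_int r - a\<bar> \<le> 1/2"
    and "quad_pot a l < n"
  shows "n / 6 * band_pot r l \<le> (\<Sum>p\<in>lb_pairs n. real_of_int (band_gain r (l ! fst p) (l ! snd p)))"
proof -
  have dev: "(\<Sum>i<n. real_of_int (l ! i) - a) = 0" by (rule sum_dev_mean_eq_0[OF assms(1,2)])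
  have quad: "quad_pot a l = (\<Sum>i<n. (real_of_int (l ! i) - a)^2)"
    using assms(1) by (simp add: quad_pot_def)
  have below: "n / 6 \<le> (\<Sum>v<n. of_bool (l ! v \<le> r))"
    using count_below_round_lower_bound[OF dev assms(3)] assms(4) quad by simp
  have above: "n / 6 \<le> (\<Sum>v<n. of_bool (r \<le> l ! v))"
    using count_above_round_lower_bound[OF dev assms(3)] assms(4) quad by simp
  have "n / 6 * band_pot r l
      = (\<Sum>u<n. real_of_int (pos_sq (l ! u - (r + 1))) * (n / 6)
               + real_of_int (pos_sq ((r - 1) - l ! u)) * (n / 6))"
    using assms(1) by (simp add: band_pot_def band_excess_def sum_distrib_left algebra_simps)
  also have "\<dots> \<le> (\<Sum>u<n. real_of_int (pos_sq (l ! u - (r + 1))) * (\<Sum>v<n. of_bool (l ! v \<le> r))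
               + real_of_int (pos_sq ((r - 1) - l ! u)) * (\<Sum>v<n. of_bool (r \<le> l ! v)))"
    using below above pos_sq_nonneg by (intro sum_mono add_mono mult_left_mono) auto
  also have "\<dots> = (\<Sum>u<n. \<Sum>v<n. real_of_int (band_gain r (l ! u) (l ! v)))"
    by (simp add: band_gain_def sum.distrib sum_distrib_left mult.commute)
  also have "\<dots> = (\<Sum>p\<in>lb_pairs n. real_of_int (band_gain r (l ! fst p) (l ! snd p)))"
    by (simp add: sum_lb_pairs band_gain_self)
  finally show ?thesis .
qed

lemma sum_band_pot_lb_balance:
  assumes "length l = n" "a = real_of_int (sum_list l) / n" "\<bar>real_of_int r - a\<bar> \<le> 1/2"
    and "quad_pot a l < n"
  shows "(\<Sum>p\<in>lb_pairs n. band_pot r (lb_balance l p)) \<le> real (n * (n - 1)) * band_pot r l - n / 12 * band_pot r l"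
proof -
  let ?G = "\<lambda>p. real_of_int (band_gain r (l ! fst p) (l ! snd p))"
  have "(\<Sum>p\<in>lb_pairs n. band_pot r (lb_balance l p)) \<le> (\<Sum>p\<in>lb_pairs n. band_pot r l - ?G p / 2)"
  proof (rule sum_mono)
    fix p assume "p \<in> lb_pairs n"
    then show "band_pot r (lb_balance l p) \<le> band_pot r l - ?G p / 2"
      using band_pot_lb_balance[of "fst p" "snd p" l r] assms(1) by simp
  qed
  also have "\<dots> = real (n * (n - 1)) * band_pot r l - (\<Sum>p\<in>lb_pairs n. ?G p) / 2"
    by (simp add: sum_subtractf sum_divide_distrib card_lb_pairs)
  finally show ?thesis using sum_lb_pairs_band_gain[OF assms] by linarith
qed

definition lb_pot :: "real \<Rightarrow> int \<Rightarrow> int list \<Rightarrow> real" where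
  "lb_pot a r l = (if real (length l) \<le> quad_pot a l then quad_pot a l else band_pot r l)"

lemma lb_pot_nonneg: "0 \<le> lb_pot a r l"
  unfolding lb_pot_def using quad_pot_nonneg band_pot_nonneg by simp

lemma lb_pot_le_quad_pot: "\<bar>real_of_int r - a\<bar> \<le> 1/2 \<Longrightarrow> lb_pot a r l \<le> quad_pot a l"
  unfolding lb_pot_def using band_pot_le_quad_pot by simp

lemma lb_pot_lb_balance_below:
  assumes "quad_pot a l < length l" "p \<in> lb_pairs (length l)"
  shows "lb_pot a r (lb_balance l p) = band_pot r (lb_balance l p)"
proof -
  obtain u v where "p = (u, v)" by fastforce
  then have "quad_pot a (lb_balance l p) \<le> quad_pot a l"
    using assms(2) quad_pot_lb_balance(2) by simp
  then show ?thesis using assms(1) by (simp add: lb_pot_def)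
qed

lemma sum_lb_pot_lb_balance:
  assumes "length l = n" "2 \<le> n" "a = real_of_int (sum_list l) / n" "\<bar>real_of_int r - a\<bar> \<le> 1/2"
  shows "(\<Sum>p\<in>lb_pairs n. lb_pot a r (lb_balance l p))
      \<le> real (n * (n - 1)) * (1 - 1 / (12 * real n)) * lb_pot a r l"
proof -
  have n: "real (n * (n - 1)) = real n * real n - real n" "2 \<le> real n"
    using assms(2) by (simp_all add: of_nat_diff algebra_simps)
  have contraction: "real (n * (n - 1)) * (1 - 1 / (12 * real n)) = real (n * (n - 1)) - (real n - 1) / 12"
    using assms(2) by (simp add: of_nat_diff field_simps)
  show ?thesis
  proof (cases "real n \<le> quad_pot a l")
    case True
    let ?Q = "quad_pot a l"
    have "(\<Sum>p\<in>lb_pairs n. lb_pot a r (lb_balance l p)) \<le> (\<Sum>p\<in>lb_pairs n. quad_pot a (lb_balance l p))"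
      by (intro sum_mono lb_pot_le_quad_pot assms(4))
    also have "\<dots> \<le> real (n * (n - 1)) * ?Q - (n * ?Q - real (n * (n - 1)) / 2)"
      by (rule sum_quad_pot_lb_balance[OF assms(1,3)])
    also have "\<dots> \<le> real (n * (n - 1)) * (1 - 1 / (12 * real n)) * ?Q"
    proof -
      have "real n * real n \<le> real n * ?Q" using True by (intro mult_left_mono) auto
      moreover have "(real n - 1) / 12 * ?Q = real n * ?Q / 12 - ?Q / 12"
        by (simp add: field_simps)
      ultimately have "(real n - 1) / 12 * ?Q \<le> n * ?Q - real (n * (n - 1)) / 2"
        using True n by linarith
      then show ?thesis unfolding contraction left_diff_distrib by linarith
    qed
    finally show ?thesis using True assms(1) by (simp add: lb_pot_def)
  next
    case False
    let ?B = "band_pot r l"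
    have "(\<Sum>p\<in>lb_pairs n. lb_pot a r (lb_balance l p)) = (\<Sum>p\<in>lb_pairs n. band_pot r (lb_balance l p))"
      using False assms(1) by (intro sum.cong refl lb_pot_lb_balance_below) auto
    also have "\<dots> \<le> real (n * (n - 1)) * ?B - n / 12 * ?B"
      using False by (intro sum_band_pot_lb_balance[OF assms(1,3,4)]) simp
    also have "\<dots> \<le> real (n * (n - 1)) * (1 - 1 / (12 * real n)) * ?B"
      unfolding contraction using band_pot_nonneg[of r l] by (simp add: algebra_simps)
    finally show ?thesis using False assms(1) by (simp add: lb_pot_def)
  qed
qed

lemma nn_integral_lb_step_lb_pot:
  assumes "length l = n" "2 \<le> n" "a = real_of_int (sum_list l) / n" "\<bar>real_of_int r - a\<bar> \<le> 1/2"
  shows "(\<integral>\<^sup>+ y. ennreal (lb_pot a r y) \<partial>lb_step l) \<le> ennreal ((1 - 1 / (12 * real n)) * lb_pot a r l)"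
proof -
  have "0 < real (n * (n - 1))" using assms(2) by simp
  have "(\<integral>\<^sup>+ y. ennreal (lb_pot a r y) \<partial>lb_step l)
      = ennreal ((\<Sum>p\<in>lb_pairs n. lb_pot a r (lb_balance l p)) / real (n * (n - 1)))"
    using nn_integral_lb_step[of l "lb_pot a r"] assms(1,2) lb_pot_nonneg by (simp add: card_lb_pairs)
  also have "\<dots> \<le> ennreal ((1 - 1 / (12 * real n)) * lb_pot a r l)"
    using sum_lb_pot_lb_balance[OF assms]
    by (intro ennreal_leI, unfold pos_divide_le_eq[OF \<open>0 < real (n * (n - 1))\<close>]) (simp add: ac_simps)
  finally show ?thesis .
qed

lemma lb_hit_invariant:
  assumes "2 \<le> length l"
  shows "s \<in> set_pmf (lb_hit r t l) \<Longrightarrow>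
     length (fst s) = length l \<and> sum_list (fst s) = sum_list l \<and> (in_band r (fst s) \<longrightarrow> snd s)"
proof (induction t arbitrary: s)
  case (Suc t)
  then obtain x b where xb: "(x, b) \<in> set_pmf (lb_hit r t l)"
    and s: "s \<in> set_pmf (map_pmf (\<lambda>y. (y, b \<or> in_band r y)) (lb_step x))"
    by auto
  have x: "length x = length l" "sum_list x = sum_list l" using Suc.IH[OF xb] by auto
  with s obtain p where "p \<in> lb_pairs (length x)" "s = (lb_balance x p, b \<or> in_band r (lb_balance x p))"
    using set_pmf_lb_step assms by auto
  then show ?case using x sum_list_lb_balance by simp
qed simp

lemma nn_integral_lb_hit_lb_pot:
  assumes "length l = n" "2 \<le> n" "a = real_of_int (sum_list l) / n" "\<bar>real_of_int r - a\<bar> \<le> 1/2"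
  shows "(\<integral>\<^sup>+ s. ennreal (lb_pot a r (fst s)) \<partial>lb_hit r t l)
      \<le> ennreal ((1 - 1 / (12 * real n))^t * lb_pot a r l)"
proof (induction t)
  case 0
  then show ?case by simp
next
  case (Suc t)
  let ?\<rho> = "1 - 1 / (12 * real n)"
  have "0 \<le> ?\<rho>" using assms(2) by (simp add: field_simps)
  have step: "(\<integral>\<^sup>+ y. ennreal (lb_pot a r y) \<partial>lb_step x) \<le> ennreal ?\<rho> * ennreal (lb_pot a r x)"
    if "(x, b) \<in> set_pmf (lb_hit r t l)" for x b
  proof -
    have "length x = n" "sum_list x = sum_list l"
      using lb_hit_invariant[OF _ that] assms(1,2) by auto
    then show ?thesis
      using nn_integral_lb_step_lb_pot[of x n a r] assms(2-4) \<open>0 \<le> ?\<rho>\<close>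
      by (simp add: ennreal_mult lb_pot_nonneg)
  qed
  have "(\<integral>\<^sup>+ s. ennreal (lb_pot a r (fst s)) \<partial>lb_hit r (Suc t) l)
      = (\<integral>\<^sup>+ s. (\<integral>\<^sup>+ y. ennreal (lb_pot a r y) \<partial>lb_step (fst s)) \<partial>lb_hit r t l)"
    by (simp add: case_prod_beta)
  also have "\<dots> \<le> (\<integral>\<^sup>+ s. ennreal ?\<rho> * ennreal (lb_pot a r (fst s)) \<partial>lb_hit r t l)"
    using step by (intro nn_integral_mono_AE) (auto simp: AE_measure_pmf_iff)
  also have "\<dots> = ennreal ?\<rho> * (\<integral>\<^sup>+ s. ennreal (lb_pot a r (fst s)) \<partial>lb_hit r t l)"
    by (rule nn_integral_cmult) simp
  also have "\<dots> \<le> ennreal ?\<rho> * ennreal (?\<rho>^t * lb_pot a r l)"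
    by (rule mult_left_mono[OF Suc.IH]) simp
  also have "\<dots> = ennreal (?\<rho>^Suc t * lb_pot a r l)"
    using \<open>0 \<le> ?\<rho>\<close> lb_pot_nonneg by (simp add: ennreal_mult[symmetric] mult.assoc)
  finally show ?case .
qed

lemma one_le_lb_pot:
  assumes "\<not> in_band r l"
  shows "1 \<le> lb_pot a r l"
proof -
  obtain i where i: "i < length l" "l ! i \<notin> {r - 1, r, r + 1}"
    using assms unfolding in_band_def by auto
  have "1 \<le> real_of_int (band_excess r (l ! i))"
    using one_le_band_excess[OF i(2)] by simp
  also have "\<dots> \<le> band_pot r l"
    unfolding band_pot_def using i(1) pos_sq_nonneg
    by (intro member_le_sum) (auto simp: band_excess_def)
  finally show ?thesis using i(1) by (auto simp: lb_pot_def)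
qed

lemma prob_lb_hit_unreached:
  assumes "length l = n" "2 \<le> n" "a = real_of_int (sum_list l) / n" "\<bar>real_of_int r - a\<bar> \<le> 1/2"
  shows "measure_pmf.prob (lb_hit r t l) {s. \<not> snd s} \<le> (1 - 1 / (12 * real n))^t * lb_pot a r l"
proof -
  let ?M = "lb_hit r t l"
  have "emeasure ?M {s. \<not> snd s} = (\<integral>\<^sup>+ s. indicator {s. \<not> snd s} s \<partial>?M)"
    by simp
  also have "\<dots> \<le> (\<integral>\<^sup>+ s. ennreal (lb_pot a r (fst s)) \<partial>?M)"
  proof (intro nn_integral_mono_AE, unfold AE_measure_pmf_iff, intro ballI)
    fix s assume "s \<in> set_pmf ?M"
    then have "\<not> snd s \<Longrightarrow> \<not> in_band r (fst s)"
      using lb_hit_invariant assms(1,2) by blast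
    then show "indicator {s. \<not> snd s} s \<le> ennreal (lb_pot a r (fst s))"
      using one_le_lb_pot by (cases "snd s") auto
  qed
  also have "\<dots> \<le> ennreal ((1 - 1 / (12 * real n))^t * lb_pot a r l)"
    by (rule nn_integral_lb_hit_lb_pot[OF assms])
  finally show ?thesis
    using assms(2) lb_pot_nonneg
    by (simp add: measure_pmf.emeasure_eq_measure ennreal_le_iff field_simps)
qed

lemma quad_pot_le_discrepancy:
  assumes "l \<noteq> []" "a = real_of_int (sum_list l) / length l"
  shows "quad_pot a l \<le> length l * (real_of_int (discrepancy l))^2"
proof -
  let ?n = "length l" and ?M = "Max (set l)" and ?m = "Min (set l)"
  have bounds: "?m \<le> l ! i" "l ! i \<le> ?M" if "i < ?n" for i
    using that assms(1) by (auto intro: Min_le Max_ge)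
  have sum: "real_of_int (sum_list l) = (\<Sum>i<?n. real_of_int (l ! i))"
    by (simp add: sum_list_sum_nth atLeast0LessThan)
  have "(\<Sum>i<?n. real_of_int ?m) \<le> (\<Sum>i<?n. real_of_int (l ! i))"
    and "(\<Sum>i<?n. real_of_int (l ! i)) \<le> (\<Sum>i<?n. real_of_int ?M)"
    using bounds by (intro sum_mono; simp)+
  then have "real ?n * ?m \<le> sum_list l" "sum_list l \<le> real ?n * ?M"
    unfolding sum by simp_all
  then have "?m \<le> a" "a \<le> ?M"
    using assms by (simp_all add: le_divide_eq divide_le_eq mult.commute)
  then have "(real_of_int (l ! i) - a)^2 \<le> (real_of_int (discrepancy l))^2" if "i < ?n" for i
    using bounds[OF that] unfolding discrepancy_def by (intro abs_le_square_iff[THEN iffD1]) auto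
  then have "quad_pot a l \<le> (\<Sum>i<?n. (real_of_int (discrepancy l))^2)"
    unfolding quad_pot_def by (intro sum_mono) auto
  then show ?thesis by simp
qed

lemma contraction_power_bound:
  fixes D U :: real
  assumes "1 \<le> n" "1 \<le> D" "0 \<le> U" "U \<le> n * D^2" "24 * (n * ln D + n * ln n) \<le> real t"
  shows "(1 - 1 / (12 * real n))^t * U \<le> 1 / n"
proof -
  let ?x = "1 / (12 * real n)"
  have x: "0 \<le> ?x" "?x \<le> 1" using assms(1) by (auto simp: field_simps)
  have "(1 - ?x)^t \<le> exp (- ?x)^t"
    using x exp_ge_add_one_self[of "- ?x"] by (intro power_mono) auto
  also have "\<dots> = exp (- (real t * ?x))"
    by (simp add: exp_of_nat_mult[symmetric])
  also have "\<dots> \<le> exp (- (2 * ln D + 2 * ln n))"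
  proof -
    have "24 * (n * ln D + n * ln n) * ?x \<le> real t * ?x"
      using assms(5) x by (intro mult_right_mono) auto
    moreover have "24 * (n * ln D + n * ln n) * ?x = 2 * ln D + 2 * ln n"
      using assms(1) by (simp add: field_simps)
    ultimately show ?thesis by simp
  qed
  also have "\<dots> = 1 / (D^2 * n^2)"
  proof -
    have "2 * ln D + 2 * ln n = ln (D^2 * n^2)"
      using assms(1,2) by (simp add: ln_mult ln_realpow)
    then show ?thesis using assms(1,2) by (simp add: exp_minus inverse_eq_divide)
  qed
  finally have "(1 - ?x)^t * U \<le> 1 / (D^2 * n^2) * (n * D^2)"
    using assms(3,4) x by (intro mult_mono) auto
  also have "\<dots> = 1 / n" using assms(1,2) by (simp add: field_simps power2_eq_square)
  finally show ?thesis .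
qed

lemma lb_hit_prob_ge:
  assumes "2 \<le> n" "length l0 = n" "0 < discrepancy l0"
  shows "1 - 1 / real n \<le> measure_pmf.prob
    (lb_hit (round (real_of_int (sum_list l0) / real n))
            (nat \<lceil>24 * (real n * ln (real_of_int (discrepancy l0)) + real n * ln (real n))\<rceil>) l0)
    {s. snd s}"
proof -
  define a where "a = real_of_int (sum_list l0) / real n"
  define r where "r = round a"
  define t where "t = nat \<lceil>24 * (real n * ln (real_of_int (discrepancy l0)) + real n * ln (real n))\<rceil>"
  have ra: "\<bar>real_of_int r - a\<bar> \<le> 1/2"
    unfolding r_def by (rule of_int_round_abs_le)
  have "l0 \<noteq> []" using assms(1,2) by auto
  then have "quad_pot a l0 \<le> n * (real_of_int (discrepancy l0))^2"
    using quad_pot_le_discrepancy[of l0 a] assms(2) a_def by simp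
  then have "lb_pot a r l0 \<le> n * (real_of_int (discrepancy l0))^2"
    using lb_pot_le_quad_pot[OF ra, of l0] by linarith
  then have "(1 - 1 / (12 * real n))^t * lb_pot a r l0 \<le> 1 / n"
    using assms(1,3) lb_pot_nonneg unfolding t_def
    by (intro contraction_power_bound) (auto intro: real_nat_ceiling_ge)
  then have "measure_pmf.prob (lb_hit r t l0) {s. \<not> snd s} \<le> 1 / n"
    using prob_lb_hit_unreached[OF assms(2,1) a_def ra, where t = t] by linarith
  moreover have "measure_pmf.prob (lb_hit r t l0) {s. snd s} = 1 - measure_pmf.prob (lb_hit r t l0) {s. \<not> snd s}"
    using measure_pmf.prob_compl[of "{s. \<not> snd s}" "lb_hit r t l0"] by (simp add: Compl_eq_Diff_UNIV[symmetric] Compl_eq)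
  ultimately show ?thesis unfolding r_def a_def t_def by linarith
qed

theorem theorem1:
  shows "\<exists>C > (0::real). \<exists>D > (0::real). \<forall>n \<ge> 2. \<forall>l0 :: int list.
     length l0 = n \<longrightarrow> (\<forall>x \<in> set l0. 0 \<le> x) \<longrightarrow> discrepancy l0 > 0 \<longrightarrow>
     measure_pmf.prob
        (lb_hit (round (real_of_int (sum_list l0) / real n))
                (nat \<lceil>C * (real n * ln (real_of_int (discrepancy l0)) + real n * ln (real n))\<rceil>) l0)
        {s. snd s}
       \<ge> 1 - D / real n"
  \<comment> \<open>The loads need not be nonnegative.\<close>
  by (intro exI[of _ "24::real"] conjI[OF _ exI[of _ "1::real"]] conjI allI impI)
    (simp_all add: lb_hit_prob_ge del: distrib_left_numeral)

end
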